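(* Let $\mathcal C$ be a Clifford circuit with linear outcome code $\mathcal O(\mathcal C)$, let $F$ be a fault operator and $u\in\mathcal O(\mathcal C)^\perp$. Then $\sum_{j=1}^m u_j\,[\overrightarrow F_{\ell_j-0.5},S_j]\equiv[F,\overleftarrow{F(u)}]\pmod 2$; that is, the faults $F$ flip the value of the outcome check $u$ if and only if $[F,\overleftarrow{F(u)}]=1$.
   Context: A Clifford circuit on $n$ qubits is a finite sequence of operations, each a unitary Clifford gate or the measurement of a Hermitian $n$-qubit Pauli, each with a level in $\{1,2,\dots\}$; operations of equal level have disjoint supports and levels are nondecreasing; depth $\Delta$ = maximal level. In circuit order the $j$-th measurement measures $S_j$ at level $\ell_j$ ($j=1,\dots,m$); outcome $o_j=0$ for eigenvalue $+1$, $1$ for $-1$. The outcome code $\mathcal O(\mathcal C)$ is the set of outcome bit-strings occurring with nonzero probability for some input state; $\perp$ refers to $(u|v)=\sum u_iv_i\bmod 2$. $\overline{\mathcal P}_N$ is the $N$-qubit Pauli group modulo phases; $[P,Q]\in\mathbb Z_2$ is $0$ iff $P,Q$ commute. $U_\ell$ is the product of unitary gates of level $\ell$ (identity if none). Fault operators $F\in\overline{\mathcal P}_{n(\Delta+1)}$ act on qubits $(\ell+0.5,q)$, $0\le\ell\le\Delta$, $1\le q\le n$, with level components $F_{\ell+0.5}$; $\eta_{\ell+0.5}(P)$ is $P$ at level $\ell+0.5$ and $I$ elsewhere. Cumulant $\overrightarrow F$: start with $F$; for $\ell=1,\dots,\Delta$ replace $\overrightarrow F_{\ell+0.5}$ by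 $\overrightarrow F_{\ell+0.5}\cdot U_\ell\overrightarrow F_{\ell-0.5}U_\ell^{-1}$. Back-cumulant $\overleftarrow F$: start with $F$; for $\ell=\Delta,\dots,1$ replace $\overleftarrow F_{\ell-0.5}$ by $\overleftarrow F_{\ell-0.5}\cdot U_\ell^{-1}\overleftarrow F_{\ell+0.5}U_\ell$. $F(u)=\prod_j\eta_{\ell_j-0.5}(S_j^{u_j})$. The faults $F$ flip the $j$-th outcome iff $[\overrightarrow F_{\ell_j-0.5},S_j]=1$, and flip the check $u$ iff the sum of the flips over $j$ with $u_j=1$ is $1$ mod 2. *)

theory Defs
  imports Complex_Main "Jordan_Normal_Form.Matrix"
begin

(* computational basis states |b>, b < 2^n; bit q of b is the state of qubit q *)
definition qbit :: "nat \<Rightarrow> nat \<Rightarrow> bool" where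
  "qbit b q = odd (b div 2 ^ q)"

(* |b> with the bits in x flipped (only qubits q < n are used) *)
definition flipx :: "nat \<Rightarrow> (nat \<Rightarrow> bool) \<Rightarrow> nat \<Rightarrow> nat" where
  "flipx n x b = (\<Sum>q<n. 2 ^ q * (if qbit b q \<noteq> x q then 1 else 0))"

(* Pauli modulo phases: a pair (x,z) of bit vectors, representative X^x Z^z *)
type_synonym pauli = "(nat \<Rightarrow> bool) \<times> (nat \<Rightarrow> bool)"

definition pvalid :: "nat \<Rightarrow> pauli \<Rightarrow> bool" where
  "pvalid n P = (\<forall>q. n \<le> q \<longrightarrow> \<not> fst P q \<and> \<not> snd P q)"

(* matrix of X^x Z^z on n qubits: X^x Z^z |c> = (-1)^(z.c) |c xor x> *)
definition XZ :: "nat \<Rightarrow> pauli \<Rightarrow> complex mat" where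
  "XZ n P = mat (2 ^ n) (2 ^ n) (\<lambda>(r, c).
      if r = flipx n (fst P) c then (-1) ^ card {q. q < n \<and> snd P q \<and> qbit c q} else 0)"

(* Hermitian Pauli (-1)^s i^(x.z) X^x Z^z, i.e. a signed tensor product of I,X,Y,Z *)
definition herm_pauli :: "nat \<Rightarrow> bool \<Rightarrow> pauli \<Rightarrow> complex mat" where
  "herm_pauli n s P = ((if s then -1 else 1) * \<i> ^ card {q. q < n \<and> fst P q \<and> snd P q}) \<cdot>\<^sub>m XZ n P"

definition adj :: "complex mat \<Rightarrow> complex mat" where
  "adj A = map_mat cnj (transpose_mat A)"

definition unitary_mat :: "nat \<Rightarrow> complex mat \<Rightarrow> bool" where
  "unitary_mat n U = (U \<in> carrier_mat (2 ^ n) (2 ^ n) \<and> U * adj U = 1\<^sub>m (2 ^ n))"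

definition clifford :: "nat \<Rightarrow> complex mat \<Rightarrow> bool" where
  "clifford n U = (unitary_mat n U \<and>
     (\<forall>P. \<exists>c Q. U * XZ n P * adj U = c \<cdot>\<^sub>m XZ n Q))"

definition pcomm :: "nat \<Rightarrow> pauli \<Rightarrow> pauli \<Rightarrow> nat" where
  "pcomm n P Q = (if XZ n P * XZ n Q = XZ n Q * XZ n P then 0 else 1)"

definition pmul :: "pauli \<Rightarrow> pauli \<Rightarrow> pauli" where
  "pmul P Q = ((\<lambda>q. fst P q \<noteq> fst Q q), (\<lambda>q. snd P q \<noteq> snd Q q))"

definition pid :: pauli where
  "pid = ((\<lambda>_. False), (\<lambda>_. False))"

definition pconj :: "nat \<Rightarrow> complex mat \<Rightarrow> pauli \<Rightarrow> pauli" where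
  "pconj n U P = (THE Q. pvalid n Q \<and> (\<exists>c. U * XZ n P * adj U = c \<cdot>\<^sub>m XZ n Q))"

datatype cop = Gate "complex mat" | Meas bool pauli
  (* Meas s P : measurement of the Hermitian Pauli herm_pauli n s P *)

(* a circuit: operations in circuit order, each with its level *)
type_synonym circuit = "(cop \<times> nat) list"

(* support of a gate: qubits on which it does not act as identity,
   i.e. qubits q such that U fails to commute with X_q or Z_q *)
definition single_X :: "nat \<Rightarrow> pauli" where "single_X q = ((\<lambda>p. p = q), (\<lambda>_. False))"
definition single_Z :: "nat \<Rightarrow> pauli" where "single_Z q = ((\<lambda>_. False), (\<lambda>p. p = q))"

fun op_support :: "nat \<Rightarrow> cop \<Rightarrow> nat set" where
  "op_support n (Gate U) = {q. q < n \<and> (U * XZ n (single_X q) \<noteq> XZ n (single_X q) * U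
                                       \<or> U * XZ n (single_Z q) \<noteq> XZ n (single_Z q) * U)}"
| "op_support n (Meas s P) = {q. q < n \<and> (fst P q \<or> snd P q)}"

fun op_wf :: "nat \<Rightarrow> cop \<Rightarrow> bool" where
  "op_wf n (Gate U) = clifford n U"
| "op_wf n (Meas s P) = pvalid n P"

definition wf_circuit :: "nat \<Rightarrow> circuit \<Rightarrow> bool" where
  "wf_circuit n C =
    ((\<forall>(g, l) \<in> set C. op_wf n g \<and> 1 \<le> l) \<and>
     sorted (map snd C) \<and>
     (\<forall>i j. i < j \<and> j < length C \<and> snd (C ! i) = snd (C ! j) \<longrightarrow>
        op_support n (fst (C ! i)) \<inter> op_support n (fst (C ! j)) = {}))"

definition depth :: "circuit \<Rightarrow> nat" where
  "depth C = Max (insert 0 (snd ` set C))"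

fun meas_list :: "circuit \<Rightarrow> (bool \<times> pauli \<times> nat) list" where
  "meas_list [] = []"
| "meas_list ((Gate U, l) # C) = meas_list C"
| "meas_list ((Meas s P, l) # C) = (s, P, l) # meas_list C"

definition num_meas :: "circuit \<Rightarrow> nat" where
  "num_meas C = length (meas_list C)"

definition S_of :: "circuit \<Rightarrow> nat \<Rightarrow> pauli" where
  "S_of C j = fst (snd (meas_list C ! j))"

definition lev :: "circuit \<Rightarrow> nat \<Rightarrow> nat" where
  "lev C j = snd (snd (meas_list C ! j))"

(* U_l: product of the unitary gates of level l (later gates applied after earlier ones) *)
fun Ulev_aux :: "nat \<Rightarrow> circuit \<Rightarrow> nat \<Rightarrow> complex mat \<Rightarrow> complex mat" where
  "Ulev_aux n [] l A = A"
| "Ulev_aux n ((Gate U, l') # C) l A = Ulev_aux n C l (if l' = l then U * A else A)"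
| "Ulev_aux n ((Meas s P, l') # C) l A = Ulev_aux n C l A"

definition Ulev :: "nat \<Rightarrow> circuit \<Rightarrow> nat \<Rightarrow> complex mat" where
  "Ulev n C l = Ulev_aux n C l (1\<^sub>m (2 ^ n))"

definition proj :: "nat \<Rightarrow> bool \<Rightarrow> pauli \<Rightarrow> bool \<Rightarrow> complex mat" where
  "proj n s P ob = (1 / 2 :: complex) \<cdot>\<^sub>m (1\<^sub>m (2 ^ n) + (if ob then -1 else 1) \<cdot>\<^sub>m herm_pauli n s P)"

(* the (unnormalised) operator of the whole circuit conditioned on outcomes os *)
fun kraus :: "nat \<Rightarrow> circuit \<Rightarrow> bool list \<Rightarrow> complex mat" where
  "kraus n [] os = 1\<^sub>m (2 ^ n)"
| "kraus n ((Gate U, l) # C) os = kraus n C os * U"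
| "kraus n ((Meas s P, l) # C) [] = 0\<^sub>m (2 ^ n) (2 ^ n)"
| "kraus n ((Meas s P, l) # C) (ob # os) = kraus n C os * proj n s P ob"

definition vnorm2 :: "complex vec \<Rightarrow> real" where
  "vnorm2 v = (\<Sum>i<dim_vec v. (cmod (v $ i))\<^sup>2)"

definition outcome_prob :: "nat \<Rightarrow> circuit \<Rightarrow> complex vec \<Rightarrow> bool list \<Rightarrow> real" where
  "outcome_prob n C psi os = vnorm2 (kraus n C os *\<^sub>v psi)"

definition outcome_code :: "nat \<Rightarrow> circuit \<Rightarrow> bool list set" where
  "outcome_code n C = {os. length os = num_meas C \<and>
     (\<exists>psi. dim_vec psi = 2 ^ n \<and> vnorm2 psi = 1 \<and> outcome_prob n C psi os > 0)}"

definition linear_code :: "nat \<Rightarrow> bool list set \<Rightarrow> bool" where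
  "linear_code m Cd = (Cd \<subseteq> {w. length w = m} \<and> replicate m False \<in> Cd \<and>
      (\<forall>a\<in>Cd. \<forall>b\<in>Cd. map2 (\<noteq>) a b \<in> Cd))"

definition code_perp :: "nat \<Rightarrow> bool list set \<Rightarrow> bool list set" where
  "code_perp m Cd = {u. length u = m \<and> (\<forall>w\<in>Cd. even (card {j. j < m \<and> u ! j \<and> w ! j}))}"

(* a fault operator: F l is the component on level l + 0.5, l = 0..depth *)
type_synonym fault = "nat \<Rightarrow> pauli"

(* flatten to a Pauli on n*(depth+1) qubits: qubit (l+0.5, q) is index l*n + q *)
definition flat :: "nat \<Rightarrow> fault \<Rightarrow> pauli" where
  "flat n F = ((\<lambda>i. fst (F (i div n)) (i mod n)), (\<lambda>i. snd (F (i div n)) (i mod n)))"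

definition fcomm :: "nat \<Rightarrow> nat \<Rightarrow> fault \<Rightarrow> fault \<Rightarrow> nat" where
  "fcomm n D F G = pcomm (n * (D + 1)) (flat n F) (flat n G)"

(* cumulant: component l + 0.5 *)
fun cum :: "nat \<Rightarrow> circuit \<Rightarrow> fault \<Rightarrow> nat \<Rightarrow> pauli" where
  "cum n C F 0 = F 0"
| "cum n C F (Suc l) = pmul (F (Suc l)) (pconj n (Ulev n C (Suc l)) (cum n C F l))"

(* back-cumulant; bcum_aux k is the component at level (depth - k) + 0.5 *)
fun bcum_aux :: "nat \<Rightarrow> circuit \<Rightarrow> fault \<Rightarrow> nat \<Rightarrow> pauli" where
  "bcum_aux n C F 0 = F (depth C)"
| "bcum_aux n C F (Suc k) = pmul (F (depth C - Suc k))
      (pconj n (adj (Ulev n C (depth C - k))) (bcum_aux n C F k))"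

definition bcum :: "nat \<Rightarrow> circuit \<Rightarrow> fault \<Rightarrow> fault" where
  "bcum n C F l = bcum_aux n C F (depth C - l)"

(* F(u) = prod_j eta_{l_j - 0.5}(S_j^{u_j}) *)
definition Fu :: "circuit \<Rightarrow> bool list \<Rightarrow> fault" where
  "Fu C u l = foldr pmul [S_of C j. j \<leftarrow> [0..<num_meas C], u ! j \<and> lev C j = l + 1] pid"

end

theory Submission
  imports Defs "Jordan_Normal_Form.Determinant"
begin

text \<open>Modulo phases, the commutator of two Paulis is the symplectic form
  \<omega>(P, Q) = \<Sum>_q (x_P(q) z_Q(q) + z_P(q) x_Q(q)) mod 2. It is additive in each argument, and
  Clifford conjugation is an isometry for it: \<omega>(P, U^-1 Q U) = \<omega>(U P U^-1, Q). Grouping the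
  measurements of the check u by level turns its flip into \<Sum>_l \<omega>(A_l, G_l), where A is the
  cumulant of F and G = F(u), while [F, B] = \<Sum>_l \<omega>(F_l, B_l) for the back-cumulant B of G.
  Expanding G_l = B_l U^-1 B_(l+1) U and F_l = A_l U' A_(l-1) U'^-1 (U = U_(l+1), U' = U_l), both
  sums become \<Sum>_l \<omega>(A_l, B_l) plus the same cross terms \<omega>(U_(l+1) A_l U_(l+1)^-1, B_(l+1)).\<close>

section \<open>Computational basis and Pauli matrices\<close>

lemma flipx_Suc:
  "flipx (Suc n) x b = flipx n x b + 2 ^ n * (if qbit b n \<noteq> x n then 1 else 0)"
  unfolding flipx_def by simp

lemma qbit_add_high:
  assumes s: "s < 2 ^ n" and e: "e \<le> (1::nat)"
  shows "qbit (s + 2 ^ n * e) q = (if q < n then qbit s q else q = n \<and> e = 1)"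
proof (cases "q < n")
  case True
  have "2 ^ n * e = 2 ^ q * (2 ^ (n - q) * e)"
    using True by (simp add: power_add[symmetric])
  moreover have "(s + 2 ^ q * k) div 2 ^ q = s div 2 ^ q + k" for k :: nat
    by simp
  ultimately have "(s + 2 ^ n * e) div 2 ^ q = s div 2 ^ q + 2 ^ (n - q) * e"
    by metis
  moreover have "even (2 ^ (n - q) * e)" using True by simp
  ultimately show ?thesis using True unfolding qbit_def by simp
next
  case False
  show ?thesis
  proof (cases "q = n")
    case True
    have "(s + 2 ^ n * e) div 2 ^ n = e" using s by simp
    then show ?thesis using True e unfolding qbit_def by (cases e) auto
  next
    case False
    then have "(2::nat) ^ Suc n \<le> 2 ^ q"
      using \<open>\<not> q < n\<close> by (intro power_increasing) auto
    moreover have "s + 2 ^ n * e < 2 ^ Suc n" using s e by (cases e) auto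
    ultimately have "(s + 2 ^ n * e) div 2 ^ q = 0" by simp
    then show ?thesis using False \<open>\<not> q < n\<close> unfolding qbit_def by simp
  qed
qed

lemma flipx_less_and_qbit:
  "flipx n x b < 2 ^ n \<and> (\<forall>q. qbit (flipx n x b) q = (q < n \<and> qbit b q \<noteq> x q))"
proof (induction n)
  case 0
  then show ?case by (simp add: flipx_def qbit_def)
next
  case (Suc n)
  then have less: "flipx n x b < 2 ^ n"
    and bits: "\<And>q. qbit (flipx n x b) q = (q < n \<and> qbit b q \<noteq> x q)" by blast+
  have "qbit (flipx (Suc n) x b) q = (q < Suc n \<and> qbit b q \<noteq> x q)" for q
  proof -
    have "qbit (flipx (Suc n) x b) q
        = (if q < n then qbit (flipx n x b) q
           else q = n \<and> (if qbit b n \<noteq> x n then 1 else 0::nat) = 1)"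
      unfolding flipx_Suc by (rule qbit_add_high[OF less]) simp
    then show ?thesis
      using bits[of q] by (cases "q < n"; cases "q = n") auto
  qed
  moreover have "flipx (Suc n) x b < 2 ^ Suc n"
    unfolding flipx_Suc using less by simp
  ultimately show ?case by blast
qed

lemma flipx_less: "flipx n x b < 2 ^ n"
  using flipx_less_and_qbit[of n x b] by simp

lemma qbit_flipx: "q < n \<Longrightarrow> qbit (flipx n x b) q = (qbit b q \<noteq> x q)"
  using conjunct2[OF flipx_less_and_qbit[of n x b], rule_format, of q] by simp

lemma qbit_above: "a < 2 ^ n \<Longrightarrow> n \<le> q \<Longrightarrow> \<not> qbit a q"
  unfolding qbit_def
  by (metis div_less even_zero order_less_le_trans one_le_numeral power_increasing)

lemma qbit_inject:
  assumes "a < 2 ^ n" "b < 2 ^ n" "\<forall>q<n. qbit a q = qbit b q"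
  shows "a = b"
proof -
  have "bit a q = bit b q" for q
    using assms qbit_above[OF assms(1), of q] qbit_above[OF assms(2), of q]
    by (cases "q < n") (auto simp: qbit_def bit_iff_odd)
  then show ?thesis
    by (simp add: bit_eq_iff)
qed

lemma qbit_0: "\<not> qbit 0 q"
  by (simp add: qbit_def)

lemma qbit_power_of_2: "qbit (2 ^ p) q = (p = q)"
  by (auto simp add: qbit_def bit_iff_odd[symmetric] bit_exp_iff)

lemma flipx_flipx:
  "c < 2 ^ n \<Longrightarrow> flipx n x (flipx n y c) = flipx n (\<lambda>q. x q \<noteq> y q) c"
  by (rule qbit_inject[where n=n]) (auto simp: flipx_less qbit_flipx)

lemma flipx_cong:
  "(\<And>q. q < n \<Longrightarrow> x q = y q) \<Longrightarrow> flipx n x b = flipx n y b"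
  unfolding flipx_def by (rule sum.cong) auto

definition parity_sign :: "nat \<Rightarrow> (nat \<Rightarrow> bool) \<Rightarrow> complex" where
  "parity_sign n \<phi> = (\<Prod>q<n. if \<phi> q then -1 else 1)"

lemma minus_one_power_card_eq_parity_sign:
  "(-1::complex) ^ card {q. q < n \<and> \<phi> q} = parity_sign n \<phi>"
proof -
  have "parity_sign n \<phi>
      = (\<Prod>q\<in>{..<n} \<inter> {q. \<phi> q}. -1) * (\<Prod>q\<in>{..<n} \<inter> - {q. \<phi> q}. 1)"
    unfolding parity_sign_def by (rule prod.If_cases) simp
  also have "\<dots> = (-1) ^ card ({..<n} \<inter> {q. \<phi> q})" by simp
  also have "{..<n} \<inter> {q. \<phi> q} = {q. q < n \<and> \<phi> q}" by auto
  finally show ?thesis by simp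
qed

lemma parity_sign_eq_power: "parity_sign n \<phi> = (-1) ^ (\<Sum>q<n. of_bool (\<phi> q) :: nat)"
  by (induction n) (auto simp: parity_sign_def power_add)

lemma parity_sign_mult:
  "parity_sign n \<phi> * parity_sign n \<psi> = parity_sign n (\<lambda>q. \<phi> q \<noteq> \<psi> q)"
  unfolding parity_sign_def prod.distrib[symmetric] by (rule prod.cong) auto

lemma parity_sign_cong:
  "(\<And>q. q < n \<Longrightarrow> \<phi> q = \<psi> q) \<Longrightarrow> parity_sign n \<phi> = parity_sign n \<psi>"
  unfolding parity_sign_def by (rule prod.cong) auto

lemma parity_sign_square: "parity_sign n \<phi> * parity_sign n \<phi> = 1"
  by (simp only: parity_sign_mult) (simp add: parity_sign_def)

lemma parity_sign_False: "parity_sign n (\<lambda>_. False) = 1"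
  by (simp add: parity_sign_def)

lemma parity_sign_single:
  assumes "q < n"
  shows "parity_sign n (\<lambda>p. z p \<and> qbit (2 ^ q) p) = (if z q then -1 else 1)"
proof -
  have "{p. p < n \<and> z p \<and> qbit (2 ^ q) p} = (if z q then {q} else {})"
    using assms by (auto simp: qbit_power_of_2)
  then show ?thesis
    unfolding minus_one_power_card_eq_parity_sign[symmetric] by simp
qed

lemma XZ_carrier [simp]: "XZ n P \<in> carrier_mat (2 ^ n) (2 ^ n)"
  unfolding XZ_def by simp

lemma XZ_dims [simp]: "dim_row (XZ n P) = 2 ^ n" "dim_col (XZ n P) = 2 ^ n"
  unfolding XZ_def by simp_all

lemma XZ_index:
  "r < 2 ^ n \<Longrightarrow> c < 2 ^ n \<Longrightarrow>
   XZ n P $$ (r, c)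
     = (if r = flipx n (fst P) c then parity_sign n (\<lambda>q. snd P q \<and> qbit c q) else 0)"
  unfolding XZ_def by (simp add: minus_one_power_card_eq_parity_sign)

lemma XZ_index_flipx_0: "XZ n P $$ (flipx n (fst P) 0, 0) = 1"
  using flipx_less[of n "fst P" 0] by (simp add: XZ_index qbit_0 parity_sign_False)

lemma XZ_mult:
  "XZ n P * XZ n Q = parity_sign n (\<lambda>q. snd P q \<and> fst Q q) \<cdot>\<^sub>m XZ n (pmul P Q)"
  (is "_ = ?s \<cdot>\<^sub>m ?M")
proof (rule eq_matI)
  fix r c
  assume "r < dim_row (?s \<cdot>\<^sub>m ?M)" "c < dim_col (?s \<cdot>\<^sub>m ?M)"
  then have r: "r < 2 ^ n" and c: "c < 2 ^ n" by auto
  let ?k = "flipx n (fst Q) c" and ?t = "parity_sign n (\<lambda>q. snd Q q \<and> qbit c q)"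
  have k: "?k < 2 ^ n" by (rule flipx_less)
  have "(XZ n P * XZ n Q) $$ (r, c) = (\<Sum>k<2 ^ n. XZ n P $$ (r, k) * XZ n Q $$ (k, c))"
    using r c by (simp add: scalar_prod_def lessThan_atLeast0)
  also have "\<dots> = (\<Sum>k<2 ^ n. if k = ?k then XZ n P $$ (r, ?k) * ?t else 0)"
    by (rule sum.cong) (auto simp: XZ_index c)
  also have "\<dots> = XZ n P $$ (r, ?k) * ?t"
    using k by simp
  also have "\<dots> = (?s \<cdot>\<^sub>m ?M) $$ (r, c)"
  proof -
    have "flipx n (fst P) ?k = flipx n (fst (pmul P Q)) c"
      using flipx_flipx[OF c] by (simp add: pmul_def)
    moreover have "parity_sign n (\<lambda>q. snd P q \<and> qbit ?k q) * ?t
        = ?s * parity_sign n (\<lambda>q. snd (pmul P Q) q \<and> qbit c q)"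
      unfolding parity_sign_mult by (rule parity_sign_cong) (auto simp: qbit_flipx pmul_def)
    ultimately show ?thesis
      using r c k by (simp add: XZ_index)
  qed
  finally show "(XZ n P * XZ n Q) $$ (r, c) = (?s \<cdot>\<^sub>m ?M) $$ (r, c)" .
qed auto

definition restrict_pauli :: "nat \<Rightarrow> pauli \<Rightarrow> pauli" where
  "restrict_pauli n P = ((\<lambda>q. q < n \<and> fst P q), (\<lambda>q. q < n \<and> snd P q))"

lemma pvalid_restrict_pauli: "pvalid n (restrict_pauli n P)"
  unfolding pvalid_def restrict_pauli_def by auto

lemma XZ_restrict_pauli: "XZ n (restrict_pauli n P) = XZ n P"
proof (rule eq_matI)
  fix i j
  assume "i < dim_row (XZ n P)" "j < dim_col (XZ n P)"
  moreover have "flipx n (fst (restrict_pauli n P)) j = flipx n (fst P) j"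
    by (rule flipx_cong) (simp add: restrict_pauli_def)
  moreover have "parity_sign n (\<lambda>q. snd (restrict_pauli n P) q \<and> qbit j q)
      = parity_sign n (\<lambda>q. snd P q \<and> qbit j q)"
    by (rule parity_sign_cong) (simp add: restrict_pauli_def)
  ultimately show "XZ n (restrict_pauli n P) $$ (i, j) = XZ n P $$ (i, j)"
    by (simp add: XZ_index)
qed auto

text \<open>The column 0 of a multiple of XZ n Q determines the scalar and the X part of Q;
  the columns 2^q then determine its Z part.\<close>
lemma XZ_smult_inject:
  assumes c: "(c::complex) \<noteq> 0" and valid: "pvalid n Q1" "pvalid n Q2"
    and eq: "c \<cdot>\<^sub>m XZ n Q1 = d \<cdot>\<^sub>m XZ n Q2"
  shows "Q1 = Q2"
proof -
  let ?r = "flipx n (fst Q1) 0"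
  have "(c \<cdot>\<^sub>m XZ n Q1) $$ (?r, 0) = (d \<cdot>\<^sub>m XZ n Q2) $$ (?r, 0)"
    using eq by simp
  then have "c = d * (if ?r = flipx n (fst Q2) 0 then 1 else 0)"
    using flipx_less[of n "fst Q1" 0] by (simp add: XZ_index qbit_0 parity_sign_False)
  then have r: "?r = flipx n (fst Q2) 0" and cd: "c = d"
    using c by (auto split: if_splits)
  have "fst Q1 q = fst Q2 q" for q
  proof (cases "q < n")
    case True
    then show ?thesis
      using r qbit_flipx[OF True, of "fst Q1" 0] qbit_flipx[OF True, of "fst Q2" 0]
      by (simp add: qbit_0)
  qed (use valid in \<open>auto simp: pvalid_def\<close>)
  then have fst_eq: "fst Q1 = fst Q2" by auto
  have "snd Q1 q = snd Q2 q" for q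
  proof (cases "q < n")
    case True
    let ?c = "(2::nat) ^ q"
    let ?r = "flipx n (fst Q1) ?c"
    have c_less: "?c < 2 ^ n" using True by simp
    have "(c \<cdot>\<^sub>m XZ n Q1) $$ (?r, ?c) = (d \<cdot>\<^sub>m XZ n Q2) $$ (?r, ?c)"
      using eq by simp
    then have "c * parity_sign n (\<lambda>p. snd Q1 p \<and> qbit ?c p)
        = c * parity_sign n (\<lambda>p. snd Q2 p \<and> qbit ?c p)"
      using c_less flipx_less[of n "fst Q1" ?c] fst_eq cd by (simp add: XZ_index)
    then show ?thesis
      using c True by (simp add: parity_sign_single split: if_splits)
  qed (use valid in \<open>auto simp: pvalid_def\<close>)
  then show ?thesis
    using fst_eq by (simp add: prod_eq_iff fun_eq_iff)
qed

section \<open>Unitary matrices\<close>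

lemma adj_carrier [simp]: "A \<in> carrier_mat r c \<Longrightarrow> adj A \<in> carrier_mat c r"
  unfolding adj_def by auto

lemma adj_dims [simp]: "dim_row (adj A) = dim_col A" "dim_col (adj A) = dim_row A"
  unfolding adj_def by auto

lemma adj_adj [simp]: "adj (adj A) = A"
  unfolding adj_def by (rule eq_matI) auto

lemma adj_one [simp]: "adj (1\<^sub>m k) = 1\<^sub>m k"
  unfolding adj_def by (rule eq_matI) auto

lemma adj_mult:
  assumes "A \<in> carrier_mat a b" "B \<in> carrier_mat b c"
  shows "adj (A * B) = adj B * adj A"
  unfolding adj_def
  by (rule eq_matI) (use assms in \<open>auto simp: scalar_prod_def ac_simps\<close>)

lemma smult_smult_mat: "a \<cdot>\<^sub>m (b \<cdot>\<^sub>m A) = (a * b :: complex) \<cdot>\<^sub>m A"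
  by (rule eq_matI) auto

lemma one_smult_mat [simp]: "(1::complex) \<cdot>\<^sub>m A = A"
  by (rule eq_matI) auto

lemma mult_smult_square_mat:
  fixes k :: complex
  assumes "A \<in> carrier_mat N N" "B \<in> carrier_mat N N"
  shows "A * (k \<cdot>\<^sub>m B) = k \<cdot>\<^sub>m (A * B)"
    and "(k \<cdot>\<^sub>m A) * B = k \<cdot>\<^sub>m (A * B)"
  using assms by (simp_all add: mult_smult_distrib[of _ N N] mult_smult_assoc_mat[of _ N N])

lemmas square_mat_assoc_simps =
  assoc_mult_mat[of _ N N _ N _ N] mult_carrier_mat[of _ N N _ N] for N

lemma unitary_matD:
  assumes "unitary_mat n U"
  shows "U \<in> carrier_mat (2 ^ n) (2 ^ n)" "adj U \<in> carrier_mat (2 ^ n) (2 ^ n)"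
    "U * adj U = 1\<^sub>m (2 ^ n)" "adj U * U = 1\<^sub>m (2 ^ n)"
    "\<And>X. X \<in> carrier_mat (2 ^ n) (2 ^ n) \<Longrightarrow> U * (adj U * X) = X"
    "\<And>X. X \<in> carrier_mat (2 ^ n) (2 ^ n) \<Longrightarrow> adj U * (U * X) = X"
proof -
  show U: "U \<in> carrier_mat (2 ^ n) (2 ^ n)" "adj U \<in> carrier_mat (2 ^ n) (2 ^ n)"
    "U * adj U = 1\<^sub>m (2 ^ n)" "adj U * U = 1\<^sub>m (2 ^ n)"
    using assms mat_mult_left_right_inverse[of U "2 ^ n" "adj U"]
    unfolding unitary_mat_def by auto
  fix X :: "complex mat"
  assume X: "X \<in> carrier_mat (2 ^ n) (2 ^ n)"
  show "U * (adj U * X) = X" "adj U * (U * X) = X"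
    using U X by (simp_all flip: assoc_mult_mat[of _ "2 ^ n" "2 ^ n" _ "2 ^ n" X "2 ^ n"])
qed

lemma unitary_mat_one: "unitary_mat n (1\<^sub>m (2 ^ n))"
  unfolding unitary_mat_def by simp

lemma unitary_mat_adj: "unitary_mat n U \<Longrightarrow> unitary_mat n (adj U)"
  using unitary_matD unfolding unitary_mat_def by auto

lemma unitary_mat_mult:
  assumes "unitary_mat n A" "unitary_mat n B"
  shows "unitary_mat n (A * B)"
proof -
  note a = unitary_matD[OF assms(1)] and b = unitary_matD[OF assms(2)]
  have "A * B * adj (A * B) = A * (B * (adj B * adj A))"
    using a b by (simp add: adj_mult[of _ "2 ^ n" "2 ^ n"] square_mat_assoc_simps[where N="2 ^ n"])
  also have "\<dots> = 1\<^sub>m (2 ^ n)"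
    using a b by simp
  finally show ?thesis
    using a b unfolding unitary_mat_def by simp
qed

lemma unitary_conj_cancel:
  assumes "unitary_mat n U" "X \<in> carrier_mat (2 ^ n) (2 ^ n)"
  shows "adj U * (U * X * adj U) * U = X" "U * (adj U * X * U) * adj U = X"
  using unitary_matD[OF assms(1)] assms(2)
  by (simp_all add: square_mat_assoc_simps[where N="2 ^ n"])

lemma unitary_conj_mult:
  assumes "unitary_mat n U"
    and "A \<in> carrier_mat (2 ^ n) (2 ^ n)" "B \<in> carrier_mat (2 ^ n) (2 ^ n)"
  shows "(U * A * adj U) * (U * B * adj U) = U * (A * B) * adj U"
  using unitary_matD[OF assms(1)] assms(2,3)
  by (simp add: square_mat_assoc_simps[where N="2 ^ n"])

lemma conj_smult:
  fixes c :: complex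
  assumes "U \<in> carrier_mat (2 ^ n) (2 ^ n)" "V \<in> carrier_mat (2 ^ n) (2 ^ n)"
    "X \<in> carrier_mat (2 ^ n) (2 ^ n)"
  shows "U * (c \<cdot>\<^sub>m X) * V = c \<cdot>\<^sub>m (U * X * V)"
  using assms by (simp add: mult_smult_square_mat[of _ "2 ^ n"])

lemma commute_unitary_conj_iff:
  assumes "unitary_mat n U"
    and "A \<in> carrier_mat (2 ^ n) (2 ^ n)" "B \<in> carrier_mat (2 ^ n) (2 ^ n)"
  shows "((U * A * adj U) * (U * B * adj U) = (U * B * adj U) * (U * A * adj U)) = (A * B = B * A)"
  using unitary_conj_mult[OF assms] unitary_conj_mult[OF assms(1,3,2)]
    unitary_conj_cancel(1)[OF assms(1)] assms(2,3) by (metis mult_carrier_mat)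

lemma commute_smult_iff:
  fixes c d :: complex
  assumes "c \<noteq> 0" "d \<noteq> 0" "A \<in> carrier_mat k k" "B \<in> carrier_mat k k"
  shows "((c \<cdot>\<^sub>m A) * (d \<cdot>\<^sub>m B) = (d \<cdot>\<^sub>m B) * (c \<cdot>\<^sub>m A)) = (A * B = B * A)"
proof -
  have "(c \<cdot>\<^sub>m A) * (d \<cdot>\<^sub>m B) = (c * d) \<cdot>\<^sub>m (A * B)"
    and "(d \<cdot>\<^sub>m B) * (c \<cdot>\<^sub>m A) = (c * d) \<cdot>\<^sub>m (B * A)"
    using assms by (simp_all add: mult_smult_square_mat[of _ k] smult_smult_mat ac_simps)
  moreover have "A * B = B * A" if "(c * d) \<cdot>\<^sub>m (A * B) = (c * d) \<cdot>\<^sub>m (B * A)"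
  proof -
    have "(1 / (c * d)) \<cdot>\<^sub>m ((c * d) \<cdot>\<^sub>m (A * B))
        = (1 / (c * d)) \<cdot>\<^sub>m ((c * d) \<cdot>\<^sub>m (B * A))"
      using that by simp
    then show ?thesis
      using assms by (simp add: smult_smult_mat)
  qed
  ultimately show ?thesis by auto
qed

section \<open>Clifford conjugation\<close>

lemma conj_XZ_scalar_nonzero:
  assumes "unitary_mat n U" "U * XZ n P * adj U = c \<cdot>\<^sub>m XZ n Q"
  shows "c \<noteq> 0"
proof
  assume "c = 0"
  note u = unitary_matD[OF assms(1)]
  have "XZ n P = adj U * (U * XZ n P * adj U) * U"
    using unitary_conj_cancel(1)[OF assms(1)] by simp
  also have "\<dots> = c \<cdot>\<^sub>m (adj U * XZ n Q * U)"
    unfolding assms(2) by (rule conj_smult[OF u(2) u(1) XZ_carrier])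
  finally have "XZ n P $$ (flipx n (fst P) 0, 0) = 0"
    using \<open>c = 0\<close> flipx_less[of n "fst P" 0] u by simp
  then show False
    using XZ_index_flipx_0 by simp
qed

lemma clifford_conj_XZ:
  assumes "clifford n U"
  shows "pvalid n (pconj n U P)
    \<and> (\<exists>c. c \<noteq> 0 \<and> U * XZ n P * adj U = c \<cdot>\<^sub>m XZ n (pconj n U P))"
proof -
  obtain c Q where "U * XZ n P * adj U = c \<cdot>\<^sub>m XZ n Q"
    using assms unfolding clifford_def by blast
  then have conj: "U * XZ n P * adj U = c \<cdot>\<^sub>m XZ n (restrict_pauli n Q)"
    by (simp add: XZ_restrict_pauli)
  have c: "c \<noteq> 0"
    using conj_XZ_scalar_nonzero[OF _ conj] assms unfolding clifford_def by blast
  have "pconj n U P = restrict_pauli n Q"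
    unfolding pconj_def
  proof (rule the_equality)
    fix Q'
    assume "pvalid n Q' \<and> (\<exists>c. U * XZ n P * adj U = c \<cdot>\<^sub>m XZ n Q')"
    then obtain c' where
      "pvalid n Q'" "c \<cdot>\<^sub>m XZ n (restrict_pauli n Q) = c' \<cdot>\<^sub>m XZ n Q'"
      using conj by auto
    then show "Q' = restrict_pauli n Q"
      using XZ_smult_inject[OF c pvalid_restrict_pauli] by metis
  qed (use conj pvalid_restrict_pauli in blast)
  then show ?thesis
    using conj c pvalid_restrict_pauli by auto
qed

lemma clifford_one: "clifford n (1\<^sub>m (2 ^ n))"
  unfolding clifford_def using unitary_mat_one
  by (metis XZ_carrier adj_one left_mult_one_mat one_smult_mat right_mult_one_mat)

lemma clifford_mult:
  assumes "clifford n A" "clifford n B"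
  shows "clifford n (A * B)"
  unfolding clifford_def
proof (intro conjI allI)
  show "unitary_mat n (A * B)"
    using assms unitary_mat_mult unfolding clifford_def by blast
  fix P
  have "unitary_mat n A" "unitary_mat n B"
    using assms unfolding clifford_def by auto
  note a = unitary_matD[OF this(1)] and b = unitary_matD[OF this(2)]
  obtain c Q where BPB: "B * XZ n P * adj B = c \<cdot>\<^sub>m XZ n Q"
    using assms(2) unfolding clifford_def by blast
  obtain d R where AQA: "A * XZ n Q * adj A = d \<cdot>\<^sub>m XZ n R"
    using assms(1) unfolding clifford_def by blast
  have "A * B * XZ n P * adj (A * B) = A * (B * XZ n P * adj B) * adj A"
    using a b
    by (simp add: adj_mult[of _ "2 ^ n" "2 ^ n"] square_mat_assoc_simps[where N="2 ^ n"])
  also have "\<dots> = c \<cdot>\<^sub>m (A * XZ n Q * adj A)"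
    unfolding BPB using a by (simp add: conj_smult)
  also have "\<dots> = (c * d) \<cdot>\<^sub>m XZ n R"
    unfolding AQA by (simp add: smult_smult_mat)
  finally show "\<exists>c Q. A * B * XZ n P * adj (A * B) = c \<cdot>\<^sub>m XZ n Q"
    by blast
qed

lemma finite_pvalid: "finite {P. pvalid n P}"
proof -
  let ?pauli_of = "\<lambda>(X, Z). ((\<lambda>q. q \<in> X), (\<lambda>q. q \<in> Z))"
  have "{P. pvalid n P} \<subseteq> ?pauli_of ` (Pow {..<n} \<times> Pow {..<n})"
  proof
    fix P
    assume "P \<in> {P. pvalid n P}"
    then have "({q. fst P q}, {q. snd P q}) \<in> Pow {..<n} \<times> Pow {..<n}"
      unfolding pvalid_def by (auto simp: not_le[symmetric])
    moreover have "P = ?pauli_of ({q. fst P q}, {q. snd P q})"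
      by simp
    ultimately show "P \<in> ?pauli_of ` (Pow {..<n} \<times> Pow {..<n})"
      by blast
  qed
  then show ?thesis
    by (rule finite_subset) simp
qed

text \<open>Conjugation by U maps the finitely many valid Paulis injectively into themselves, hence
  onto them; so every Pauli Q is proportional to some U P U^-1, and then U^-1 Q U is
  proportional to XZ P.\<close>
lemma clifford_adj:
  assumes cl: "clifford n U"
  shows "clifford n (adj U)"
proof -
  let ?V = "{P. pvalid n P}"
  have u: "unitary_mat n U"
    using cl unfolding clifford_def by blast
  note uu = unitary_matD[OF u]
  have "inj_on (pconj n U) ?V"
  proof (rule inj_onI)
    fix P1 P2
    assume valid: "P1 \<in> ?V" "P2 \<in> ?V" and eq: "pconj n U P1 = pconj n U P2"
    obtain c1 c2 where c: "c1 \<noteq> 0" "c2 \<noteq> 0"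
      and "U * XZ n P1 * adj U = c1 \<cdot>\<^sub>m XZ n (pconj n U P1)"
        "U * XZ n P2 * adj U = c2 \<cdot>\<^sub>m XZ n (pconj n U P1)"
      using clifford_conj_XZ[OF cl, of P1] clifford_conj_XZ[OF cl, of P2] eq by metis
    then have "c2 \<cdot>\<^sub>m (U * XZ n P1 * adj U) = c1 \<cdot>\<^sub>m (U * XZ n P2 * adj U)"
      by (simp add: smult_smult_mat ac_simps)
    then have "adj U * (c2 \<cdot>\<^sub>m (U * XZ n P1 * adj U)) * U
        = adj U * (c1 \<cdot>\<^sub>m (U * XZ n P2 * adj U)) * U"
      by simp
    then have "c2 \<cdot>\<^sub>m XZ n P1 = c1 \<cdot>\<^sub>m XZ n P2"
      using uu
      by (simp add: conj_smult unitary_conj_cancel(1)[OF u] square_mat_assoc_simps(2)[where N="2 ^ n"])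
    then show "P1 = P2"
      using XZ_smult_inject[OF c(2)] valid by simp
  qed
  moreover have "pconj n U ` ?V \<subseteq> ?V"
    using clifford_conj_XZ[OF cl] by auto
  ultimately have onto: "pconj n U ` ?V = ?V"
    using endo_inj_surj[OF finite_pvalid] by blast
  have "\<exists>c Q'. adj U * XZ n Q * adj (adj U) = c \<cdot>\<^sub>m XZ n Q'" for Q
  proof -
    obtain P where "pconj n U P = restrict_pauli n Q"
      using onto pvalid_restrict_pauli by (metis (mono_tags, lifting) imageE mem_Collect_eq)
    then obtain c where
      c: "c \<noteq> 0" "U * XZ n P * adj U = c \<cdot>\<^sub>m XZ n (restrict_pauli n Q)"
      using clifford_conj_XZ[OF cl, of P] by metis
    have "adj U * XZ n Q * adj (adj U)
        = (1 / c) \<cdot>\<^sub>m (adj U * (c \<cdot>\<^sub>m XZ n (restrict_pauli n Q)) * U)"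
      using c(1)
      by (simp add: XZ_restrict_pauli conj_smult[OF uu(2) uu(1) XZ_carrier] smult_smult_mat)
    also have "\<dots> = (1 / c) \<cdot>\<^sub>m XZ n P"
      unfolding c(2)[symmetric] using unitary_conj_cancel(1)[OF u] by simp
    finally show ?thesis
      by blast
  qed
  then show ?thesis
    unfolding clifford_def using unitary_mat_adj[OF u] by blast
qed

lemma pcomm_pconj_adj:
  assumes cl: "clifford n U"
  shows "pcomm n P (pconj n (adj U) Q) = pcomm n (pconj n U P) Q"
proof -
  have u: "unitary_mat n U"
    using cl unfolding clifford_def by blast
  note uu = unitary_matD[OF u]
  let ?Q' = "pconj n (adj U) Q" and ?P' = "pconj n U P"
  obtain c where c: "c \<noteq> 0" "adj U * XZ n Q * U = c \<cdot>\<^sub>m XZ n ?Q'"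
    using clifford_conj_XZ[OF clifford_adj[OF cl], of Q] by auto
  obtain d where d: "d \<noteq> 0" "U * XZ n P * adj U = d \<cdot>\<^sub>m XZ n ?P'"
    using clifford_conj_XZ[OF cl, of P] by auto
  have "(XZ n P * XZ n ?Q' = XZ n ?Q' * XZ n P)
      = (XZ n P * (c \<cdot>\<^sub>m XZ n ?Q') = (c \<cdot>\<^sub>m XZ n ?Q') * XZ n P)"
    using commute_smult_iff[of 1 c "XZ n P" "2 ^ n" "XZ n ?Q'"] c by simp
  also have "\<dots> = (U * XZ n P * adj U * (U * (adj U * XZ n Q * U) * adj U)
      = U * (adj U * XZ n Q * U) * adj U * (U * XZ n P * adj U))"
    unfolding c(2)[symmetric]
    using commute_unitary_conj_iff[OF u, of "XZ n P" "adj U * XZ n Q * U"] uu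
    by (simp add: square_mat_assoc_simps[where N="2 ^ n"])
  also have "\<dots> = ((d \<cdot>\<^sub>m XZ n ?P') * XZ n Q = XZ n Q * (d \<cdot>\<^sub>m XZ n ?P'))"
    unfolding d(2) using unitary_conj_cancel(2)[OF u] by simp
  also have "\<dots> = (XZ n ?P' * XZ n Q = XZ n Q * XZ n ?P')"
    using commute_smult_iff[of d 1 "XZ n ?P'" "2 ^ n" "XZ n Q"] d by simp
  finally show ?thesis
    unfolding pcomm_def by simp
qed

section \<open>The symplectic form\<close>

definition symplectic :: "nat \<Rightarrow> pauli \<Rightarrow> pauli \<Rightarrow> nat" where
  "symplectic n P Q = (\<Sum>q<n. of_bool (fst P q \<and> snd Q q) + of_bool (snd P q \<and> fst Q q))"

lemma pmul_commute: "pmul P Q = pmul Q P"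
  unfolding pmul_def by auto

lemma symplectic_commute: "symplectic n P Q = symplectic n Q P"
  unfolding symplectic_def by (rule sum.cong) auto

lemma symplectic_pid: "symplectic n P pid = 0"
  unfolding symplectic_def pid_def by simp

lemma pcomm_eq_symplectic_mod2: "pcomm n P Q = symplectic n P Q mod 2"
proof -
  let ?a = "parity_sign n (\<lambda>q. snd P q \<and> fst Q q)"
    and ?b = "parity_sign n (\<lambda>q. snd Q q \<and> fst P q)"
  let ?M = "XZ n (pmul P Q)" and ?r = "flipx n (fst (pmul P Q)) 0"
  have PQ: "XZ n P * XZ n Q = ?a \<cdot>\<^sub>m ?M"
    by (rule XZ_mult)
  have QP: "XZ n Q * XZ n P = ?b \<cdot>\<^sub>m ?M"
    using XZ_mult[of n Q P] pmul_commute by metis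
  have "(XZ n P * XZ n Q = XZ n Q * XZ n P) = (?a = ?b)"
  proof
    assume "XZ n P * XZ n Q = XZ n Q * XZ n P"
    then have "(?a \<cdot>\<^sub>m ?M) $$ (?r, 0) = (?b \<cdot>\<^sub>m ?M) $$ (?r, 0)"
      unfolding PQ QP by simp
    then show "?a = ?b"
      using flipx_less[of n "fst (pmul P Q)" 0] XZ_index_flipx_0[of n "pmul P Q"] by simp
  qed (simp add: PQ QP)
  also have "\<dots> = (?a * ?b = 1)"
  proof
    have bb: "?b * ?b = 1"
      by (rule parity_sign_square)
    show "?a = ?b \<Longrightarrow> ?a * ?b = 1"
      using bb by simp
    assume "?a * ?b = 1"
    then have "?a * (?b * ?b) = ?b"
      by (simp add: mult.assoc[symmetric])
    then show "?a = ?b"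
      using bb by simp
  qed
  also have "?a * ?b = (-1) ^ symplectic n P Q"
  proof -
    have "(\<Sum>q<n. of_bool (snd P q \<and> fst Q q) + of_bool (snd Q q \<and> fst P q))
        = symplectic n P Q"
      unfolding symplectic_def by (rule sum.cong) auto
    then show ?thesis
      by (simp only: parity_sign_eq_power power_add[symmetric] sum.distrib[symmetric])
  qed
  finally show ?thesis
    unfolding pcomm_def by (simp add: minus_one_power_iff mod2_eq_if)
qed

lemma symplectic_pmul_mod2:
  "symplectic n P (pmul Q R) mod 2 = (symplectic n P Q + symplectic n P R) mod 2"
proof -
  have "symplectic n P Q + symplectic n P R = symplectic n P (pmul Q R)
      + 2 * (\<Sum>q<n. of_bool (fst P q \<and> snd Q q \<and> snd R q)
                   + of_bool (snd P q \<and> fst Q q \<and> fst R q))"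
    unfolding symplectic_def sum.distrib[symmetric] sum_distrib_left
    by (rule sum.cong) (auto simp: pmul_def)
  then show ?thesis
    by simp
qed

lemma pmul_symplectic_mod2:
  "symplectic n (pmul Q R) P mod 2 = (symplectic n Q P + symplectic n R P) mod 2"
  using symplectic_pmul_mod2[of n P Q R] by (simp only: symplectic_commute[of n P])

lemma symplectic_foldr_pmul_mod2:
  "symplectic n P (foldr pmul Qs pid) mod 2 = (\<Sum>Q\<leftarrow>Qs. symplectic n P Q) mod 2"
proof (induction Qs)
  case Nil
  then show ?case by (simp add: symplectic_pid)
next
  case (Cons Q Qs)
  have "symplectic n P (foldr pmul (Q # Qs) pid) mod 2
      = (symplectic n P Q + symplectic n P (foldr pmul Qs pid)) mod 2"
    by (simp add: symplectic_pmul_mod2)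
  also have "\<dots> = (symplectic n P Q + (\<Sum>Q\<leftarrow>Qs. symplectic n P Q)) mod 2"
    by (rule mod_add_cong[OF refl Cons.IH])
  finally show ?case by simp
qed

lemma sum_mod_cong:
  fixes f g :: "'a \<Rightarrow> nat"
  assumes "\<And>i. i \<in> A \<Longrightarrow> f i mod m = g i mod m"
  shows "sum f A mod m = sum g A mod m"
proof -
  have "sum f A mod m = (\<Sum>i\<in>A. f i mod m) mod m"
    by (rule mod_sum_eq[symmetric])
  also have "(\<Sum>i\<in>A. f i mod m) = (\<Sum>i\<in>A. g i mod m)"
    using assms by (rule sum.cong[OF refl])
  finally show ?thesis
    by (simp add: mod_sum_eq)
qed

lemma sum_div_mod:
  fixes n k :: nat
  shows "(\<Sum>i<n * k. h (i div n) (i mod n)) = (\<Sum>l<k. \<Sum>q<n. h l q :: 'a::comm_monoid_add)"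
proof -
  have bound: "l * n + q < k * n" if "l < k" "q < n" for l q
    using that mult_le_mono1[of "Suc l" k n] by simp
  have mod_less: "i mod n < n" if "i < k * n" for i
    using that by (cases "n = 0") auto
  have "(\<Sum>i<n * k. h (i div n) (i mod n)) = (\<Sum>(l, q)\<in>{..<k} \<times> {..<n}. h l q)"
    by (rule sum.reindex_bij_witness
        [where i="\<lambda>(l, q). l * n + q" and j="\<lambda>i. (i div n, i mod n)"])
      (auto simp: bound mod_less less_mult_imp_div_less mult.commute[of n k])
  then show ?thesis
    by (simp add: sum.cartesian_product)
qed

lemma fcomm_eq_level_sum: "fcomm n D F G = (\<Sum>l\<le>D. symplectic n (F l) (G l)) mod 2"
proof -
  have "symplectic (n * (D + 1)) (flat n F) (flat n G) = (\<Sum>l<D + 1. symplectic n (F l) (G l))"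
    unfolding symplectic_def flat_def fst_conv snd_conv by (rule sum_div_mod)
  then show ?thesis
    unfolding fcomm_def pcomm_eq_symplectic_mod2 by (simp add: lessThan_Suc_atMost)
qed

section \<open>Cumulants and outcome checks\<close>

lemma meas_list_in: "(s, P, l) \<in> set (meas_list C) \<Longrightarrow> (Meas s P, l) \<in> set C"
  by (induction C rule: meas_list.induct) auto

lemma lev_bounds:
  assumes "wf_circuit n C" "j < num_meas C"
  shows "1 \<le> lev C j \<and> lev C j \<le> depth C"
proof -
  have "(fst (meas_list C ! j), S_of C j, lev C j) \<in> set (meas_list C)"
    using assms(2) unfolding num_meas_def S_of_def lev_def by simp
  then have op: "(Meas (fst (meas_list C ! j)) (S_of C j), lev C j) \<in> set C"
    by (rule meas_list_in)
  then have "1 \<le> lev C j"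
    using assms(1) unfolding wf_circuit_def by fastforce
  moreover have "lev C j \<le> depth C"
    unfolding depth_def by (rule Max_ge) (use op in force)+
  ultimately show ?thesis ..
qed

lemma Ulev_aux_clifford:
  assumes "\<And>U l'. (Gate U, l') \<in> set C \<Longrightarrow> clifford n U" "clifford n A"
  shows "clifford n (Ulev_aux n C l A)"
  using assms
proof (induction n C l A rule: Ulev_aux.induct)
  case (2 n U l' C l A)
  have "clifford n U"
    using "2.prems"(1)[of U l'] by simp
  then have "clifford n (if l' = l then U * A else A)"
    using clifford_mult "2.prems"(2) by simp
  moreover have "\<And>V l''. (Gate V, l'') \<in> set C \<Longrightarrow> clifford n V"
    using "2.prems"(1) by (meson list.set_intros(2))
  ultimately have "clifford n (Ulev_aux n C l (if l' = l then U * A else A))"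
    using "2.IH" by blast
  then show ?case
    by simp
qed simp_all

lemma Ulev_clifford: "wf_circuit n C \<Longrightarrow> clifford n (Ulev n C l)"
  unfolding Ulev_def by (rule Ulev_aux_clifford) (auto simp: wf_circuit_def clifford_one)

lemma pmul_pmul_cancel: "pmul (pmul P Q) Q = P"
  unfolding pmul_def by (auto simp: prod_eq_iff fun_eq_iff)

lemma bcum_depth: "bcum n C G (depth C) = G (depth C)"
  unfolding bcum_def by simp

lemma bcum_less_depth:
  assumes "l < depth C"
  shows "bcum n C G l = pmul (G l) (pconj n (adj (Ulev n C (Suc l))) (bcum n C G (Suc l)))"
proof -
  have "depth C - l = Suc (depth C - Suc l)"
    using assms by simp
  moreover have "depth C - Suc (depth C - Suc l) = l" "depth C - (depth C - Suc l) = Suc l"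
    using assms by auto
  ultimately show ?thesis
    unfolding bcum_def by simp
qed

lemma sum_list_map_filter_upt:
  "sum_list (map g (filter P [0..<m])) = (\<Sum>j<m. if P j then g j else (0::'a::comm_monoid_add))"
  by (induction m) auto

lemma symplectic_Fu_mod2:
  "symplectic n A (Fu C u l) mod 2
   = (\<Sum>j<num_meas C. if u ! j \<and> lev C j = l + 1 then symplectic n A (S_of C j) else 0) mod 2"
proof -
  have "[S_of C j. j \<leftarrow> js, u ! j \<and> lev C j = l + 1]
      = map (S_of C) (filter (\<lambda>j. u ! j \<and> lev C j = l + 1) js)" for js
    by (induction js) auto
  then show ?thesis
    unfolding Fu_def symplectic_foldr_pmul_mod2 by (simp add: sum_list_map_filter_upt o_def)
qed

lemma check_flip_eq_level_sum:
  assumes wf: "wf_circuit n C"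
  shows "(\<Sum>j<num_meas C. if u ! j then pcomm n (A (lev C j - 1)) (S_of C j) else 0) mod 2
       = (\<Sum>l\<le>depth C. symplectic n (A l) (Fu C u l)) mod 2"
proof -
  let ?m = "num_meas C"
  let ?term = "\<lambda>l j. if u ! j \<and> lev C j = l + 1 then symplectic n (A l) (S_of C j) else 0"
  have level_of_j: "(\<Sum>l\<le>depth C. ?term l j)
      = (if u ! j then symplectic n (A (lev C j - 1)) (S_of C j) else 0)" if "j < ?m" for j
  proof (cases "u ! j")
    case True
    have "(lev C j = Suc l) = (l = lev C j - 1)" for l
      using lev_bounds[OF wf that] by auto
    moreover have "lev C j - 1 \<le> depth C"
      using lev_bounds[OF wf that] by linarith
    ultimately show ?thesis
      using True by (simp add: sum.delta)
  qed simp
  have "(\<Sum>l\<le>depth C. symplectic n (A l) (Fu C u l)) mod 2 = (\<Sum>l\<le>depth C. \<Sum>j<?m. ?term l j) mod 2"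
    by (rule sum_mod_cong) (rule symplectic_Fu_mod2)
  also have "(\<Sum>l\<le>depth C. \<Sum>j<?m. ?term l j)
      = (\<Sum>j<?m. if u ! j then symplectic n (A (lev C j - 1)) (S_of C j) else 0)"
    by (subst sum.swap) (rule sum.cong[OF refl], rule level_of_j, simp)
  also have "\<dots> mod 2 = (\<Sum>j<?m. if u ! j then pcomm n (A (lev C j - 1)) (S_of C j) else 0) mod 2"
    by (rule sum_mod_cong) (simp add: pcomm_eq_symplectic_mod2)
  finally show ?thesis ..
qed

lemma cum_bcum_level_sum:
  assumes cl: "\<And>l. clifford n (Ulev n C l)"
  shows "(\<Sum>l\<le>depth C. symplectic n (cum n C F l) (G l)) mod 2
       = (\<Sum>l\<le>depth C. symplectic n (F l) (bcum n C G l)) mod 2"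
proof -
  let ?D = "depth C" and ?A = "cum n C F" and ?B = "bcum n C G" and ?\<omega> = "symplectic n"
  define cross where "cross l = pcomm n (pconj n (Ulev n C (Suc l)) (?A l)) (?B (Suc l))" for l
  have G_terms: "?\<omega> (?A l) (G l) mod 2 = (?\<omega> (?A l) (?B l) + (if l < ?D then cross l else 0)) mod 2"
    if "l \<le> ?D" for l
  proof (cases "l < ?D")
    case True
    let ?B' = "pconj n (adj (Ulev n C (Suc l))) (?B (Suc l))"
    have "G l = pmul (?B l) ?B'"
      using bcum_less_depth[OF True] pmul_pmul_cancel by metis
    then have "?\<omega> (?A l) (G l) mod 2 = (?\<omega> (?A l) (?B l) + ?\<omega> (?A l) ?B') mod 2"
      by (simp add: symplectic_pmul_mod2)
    moreover have "cross l = ?\<omega> (?A l) ?B' mod 2"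
      unfolding cross_def pcomm_pconj_adj[OF cl, symmetric] by (rule pcomm_eq_symplectic_mod2)
    ultimately show ?thesis
      using True by (simp add: mod_add_right_eq)
  next
    case False
    then show ?thesis
      using that bcum_depth[of n C G] by simp
  qed
  have F_terms: "?\<omega> (F l) (?B l) mod 2 = (?\<omega> (?A l) (?B l) + (if l = 0 then 0 else cross (l - 1))) mod 2"
    for l
  proof (cases l)
    case (Suc k)
    then have "F l = pmul (?A l) (pconj n (Ulev n C l) (?A k))"
      using pmul_pmul_cancel by simp
    then have "?\<omega> (F l) (?B l) mod 2 = (?\<omega> (?A l) (?B l) + ?\<omega> (pconj n (Ulev n C l) (?A k)) (?B l)) mod 2"
      by (simp add: pmul_symplectic_mod2)
    then show ?thesis
      using Suc by (simp add: cross_def pcomm_eq_symplectic_mod2 mod_add_right_eq)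
  qed simp
  have "(\<Sum>l\<le>?D. if l < ?D then cross l else 0) = (\<Sum>l<?D. cross l)"
    unfolding lessThan_Suc_atMost[symmetric] sum.lessThan_Suc by simp
  moreover have "(\<Sum>l\<le>?D. if l = 0 then 0 else cross (l - 1)) = (\<Sum>l<?D. cross l)"
    unfolding sum.atMost_shift by simp
  ultimately have cross_shift:
    "(\<Sum>l\<le>?D. if l < ?D then cross l else 0) = (\<Sum>l\<le>?D. if l = 0 then 0 else cross (l - 1))"
    by simp
  have "(\<Sum>l\<le>?D. ?\<omega> (?A l) (G l)) mod 2
      = (\<Sum>l\<le>?D. ?\<omega> (?A l) (?B l) + (if l < ?D then cross l else 0)) mod 2"
    by (rule sum_mod_cong) (simp add: G_terms)
  also have "\<dots> = (\<Sum>l\<le>?D. ?\<omega> (?A l) (?B l) + (if l = 0 then 0 else cross (l - 1))) mod 2"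
    by (simp only: sum.distrib cross_shift)
  also have "\<dots> = (\<Sum>l\<le>?D. ?\<omega> (F l) (?B l)) mod 2"
    by (rule sum_mod_cong) (simp add: F_terms)
  finally show ?thesis .
qed

theorem mainTheorem19:
  fixes n :: nat and C :: circuit and F :: fault and u :: "bool list"
  assumes "wf_circuit n C"
    and "linear_code (num_meas C) (outcome_code n C)"
    and "u \<in> code_perp (num_meas C) (outcome_code n C)"
  shows "(\<Sum>j<num_meas C. if u ! j then pcomm n (cum n C F (lev C j - 1)) (S_of C j) else 0) mod 2
           = fcomm n (depth C) F (bcum n C (Fu C u))"
  unfolding check_flip_eq_level_sum[OF assms(1)] fcomm_eq_level_sum
  using cum_bcum_level_sum[OF Ulev_clifford[OF assms(1)]] .

end
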